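(* Assume the seeds are i.i.d. uniform on $[n]$. Let $(m(n))$, indexed by even $n\ge6$, be a sequence of positive integers with $m(n)=o(\sqrt n)$, let $\eta\in(0,\tfrac12)$ be fixed, and let $(l_n)$ be integers with $2\le l_n<n/2$ and $l_n=\eta n+o(\sqrt n)$. Then: (i) if $\lim_{n\to\infty}m(n)=m_0\in\mathbb N$, then $\lim_{n\to\infty}p_1(n,m(n),l_n)=p(\infty,m_0,\eta)$; (ii) if $\lim_{n\to\infty}m(n)=\infty$, then $\lim_{n\to\infty}p_1(n,m(n),l_n)=\lim_{m\to\infty}p(\infty,m,\eta)=1$.
   Context: Discrete model: candidates $[n]$, $m$ voters; voter $j$ has the clockwise oriented preference list $(s_j,s_j+1,\dots,n,1,\dots,s_j-1)$ with seed $s_j$; seeds independent uniform on $[n]$. In an election among a non-empty $S\subseteq[n]$ each voter votes for the first candidate of $S$ in its list; $\Xi_S(i)$ is the number of votes for $i$. Two-round election with partition $(A,B)$: the winner of $A$ is the $a\in A$ with $\Xi_A(a)>\Xi_A(a')$ for all other $a'\in A$ (if none, nobody wins); likewise for $B$; between first-round winners $a,b$, $a$ wins iff $\Xi_{\{a,b\}}(a)>\Xi_{\{a,b\}}(b)$ (ties: nobody wins). $A^{(1,n,l)}=\{1,\dots,l\}\cup\{l+2i:1\le i\le(n-2l)/2\}$, $B^{(1,n,l)}=[n]\setminus A^{(1,n,l)}$, and $p_1(n,m,l)$ is the probability that candidate 1 wins with partition $(A^{(1,n,l)},B^{(1,n,l)})$. Continuous model: $U_1,\dots,U_m$ i.i.d.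 uniform on $[0,1)$, and for an arc $(a,b)$ of the circle $[0,1)$ (taken mod 1), $N_{(a,b)}=\sum_{j=1}^m\mathbf I_{(a,b)}(U_j)$. For $\eta\in(0,\tfrac12)$, $p(\infty,m,\eta)$ is the probability of the event $\{N_{(1-\eta,1)}\ge2,\ N_{(0,\eta)}\ge2,\ N_{(0,\eta)}<m/2\}$; explicitly $$p(\infty,m,\eta)=\sum_{s=2}^{\lfloor (m-1)/2\rfloor}\sum_{t=2}^{m-s}\frac{m!}{s!\,t!\,(m-s-t)!}\eta^{s+t}(1-2\eta)^{m-s-t}.$$ *)

theory Defs
  imports "HOL-Probability.Probability"
begin

text \<open>Discrete model. Candidates are 1..n. A voter with seed s has the list
 (s, s+1, ..., n, 1, ..., s-1); the position of candidate i in this list is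
 (i + n - s) mod n.\<close>

definition pos :: "nat \<Rightarrow> nat \<Rightarrow> nat \<Rightarrow> nat" where
  "pos n s i = (i + n - s) mod n"

definition first_choice :: "nat \<Rightarrow> nat \<Rightarrow> nat set \<Rightarrow> nat" where
  "first_choice n s S = (THE i. i \<in> S \<and> (\<forall>j\<in>S. pos n s i \<le> pos n s j))"

definition Xi :: "nat \<Rightarrow> nat \<Rightarrow> (nat \<Rightarrow> nat) \<Rightarrow> nat set \<Rightarrow> nat \<Rightarrow> nat" where
  "Xi n m seed S i = card {j \<in> {..<m}. first_choice n (seed j) S = i}"

definition wins_in :: "nat \<Rightarrow> nat \<Rightarrow> (nat \<Rightarrow> nat) \<Rightarrow> nat set \<Rightarrow> nat \<Rightarrow> bool" where
  "wins_in n m seed S a \<longleftrightarrow> a \<in> S \<and> (\<forall>a'\<in>S - {a}. Xi n m seed S a' < Xi n m seed S a)"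

definition wins_two_round ::
  "nat \<Rightarrow> nat \<Rightarrow> (nat \<Rightarrow> nat) \<Rightarrow> nat set \<Rightarrow> nat set \<Rightarrow> nat \<Rightarrow> bool" where
  "wins_two_round n m seed A B c \<longleftrightarrow>
     (\<exists>a b. wins_in n m seed A a \<and> wins_in n m seed B b \<and>
        ((c = a \<and> Xi n m seed {a, b} b < Xi n m seed {a, b} a) \<or>
         (c = b \<and> Xi n m seed {a, b} a < Xi n m seed {a, b} b)))"

definition A1 :: "nat \<Rightarrow> nat \<Rightarrow> nat set" where
  "A1 n l = {1..l} \<union> {l + 2 * i | i. 1 \<le> i \<and> i \<le> (n - 2 * l) div 2}"

definition B1 :: "nat \<Rightarrow> nat \<Rightarrow> nat set" where
  "B1 n l = {1..n} - A1 n l"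

text \<open>p_1(n,m,l): seeds i.i.d. uniform on [n], i.e. uniform over all seed vectors.\<close>
definition p1 :: "nat \<Rightarrow> nat \<Rightarrow> nat \<Rightarrow> real" where
  "p1 n m l = real (card {seed \<in> {..<m} \<rightarrow>\<^sub>E {1..n}.
                     wins_two_round n m seed (A1 n l) (B1 n l) 1}) / real n ^ m"

definition N_arc :: "nat \<Rightarrow> real \<Rightarrow> real \<Rightarrow> (nat \<Rightarrow> real) \<Rightarrow> nat" where
  "N_arc m a b U = card {j \<in> {..<m}. U j \<in> {a<..<b}}"

definition unif_cube :: "nat \<Rightarrow> (nat \<Rightarrow> real) measure" where
  "unif_cube m = PiM {..<m} (\<lambda>_. uniform_measure lborel {0..<1})"

definition p_inf :: "nat \<Rightarrow> real \<Rightarrow> real" where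
  "p_inf m \<eta> = measure (unif_cube m)
     {U \<in> space (unif_cube m). N_arc m (1 - \<eta>) 1 U \<ge> 2 \<and> N_arc m 0 \<eta> U \<ge> 2
        \<and> real (N_arc m 0 \<eta> U) < real m / 2}"

end

theory Submission
  imports Defs
begin

text \<open>Call a voter of class 1 if its seed lies in \<open>(n - l, n]\<close> and of class 2 if it lies in
  \<open>[2, l + 1]\<close>. The class-1 voters choose \<open>1\<close> from \<open>A1 n l\<close>, the class-2 voters choose \<open>l + 1\<close>
  from \<open>B1 n l\<close> and from \<open>{1, l + 1}\<close>, and any other candidate of \<open>A1 n l\<close> or \<open>B1 n l\<close> is
  chosen only by voters whose seed is that candidate or the one below it, because consecutive
  members of either set are at most two apart. So unless some seed is \<open>1\<close> or two seeds are at
  distance at most one, an event of probability \<open>O(m\<^sup>2 / n)\<close>, candidate 1 wins exactly when at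
  least two voters have class 1, at least two have class 2, and fewer than \<open>m / 2\<close> have class 2.
  The classes are i.i.d. with both nonzero classes of probability \<open>l / n\<close>, so \<open>p1\<close> is within
  \<open>O(m\<^sup>2 / n)\<close> of a polynomial in \<open>l / n\<close>; the same polynomial at \<open>\<eta>\<close> is \<open>p_inf m \<eta>\<close>. It is
  continuous in its argument, and exponential moment bounds on the two class counts show that it
  tends to \<open>1\<close> as \<open>m \<rightarrow> \<infinity>\<close>.\<close>

lemma pos_eq_if:
  assumes "s \<in> {1..n}" "i \<in> {1..n}"
  shows "pos n s i = (if s \<le> i then i - s else i + n - s)"
  using assms unfolding pos_def
  by (auto simp: mod_if le_diff_conv2)

lemma inj_on_pos: "s \<in> {1..n} \<Longrightarrow> inj_on (pos n s) {1..n}"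
  by (rule inj_onI) (auto simp: pos_eq_if split: if_splits)

lemma first_choice_eqI:
  assumes "S \<subseteq> {1..n}" "s \<in> {1..n}" "i \<in> S" "\<And>j. j \<in> S \<Longrightarrow> pos n s i \<le> pos n s j"
  shows "first_choice n s S = i"
  unfolding first_choice_def
proof (rule the_equality)
  fix x assume x: "x \<in> S \<and> (\<forall>j\<in>S. pos n s x \<le> pos n s j)"
  then have "pos n s x = pos n s i" using assms by (meson antisym)
  then show "x = i" using inj_on_pos[OF assms(2)] x assms by (auto dest: inj_onD)
qed (use assms in auto)

lemma first_choice_least:
  assumes "S \<subseteq> {1..n}" "s \<in> {1..n}" "S \<noteq> {}"
  shows "first_choice n s S \<in> S" "j \<in> S \<Longrightarrow> pos n s (first_choice n s S) \<le> pos n s j"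
proof -
  have "finite S" using assms(1) finite_subset by blast
  then obtain i where i: "i \<in> S" "\<forall>j\<in>S. pos n s i \<le> pos n s j"
    using assms(3) by (metis arg_min_if_finite(1) arg_min_least)
  then have "first_choice n s S = i" using first_choice_eqI assms by blast
  with i show "first_choice n s S \<in> S" "j \<in> S \<Longrightarrow> pos n s (first_choice n s S) \<le> pos n s j"
    by auto
qed

lemma first_choice_self: "S \<subseteq> {1..n} \<Longrightarrow> s \<in> S \<Longrightarrow> first_choice n s S = s"
  by (rule first_choice_eqI) (auto simp: pos_def)

text \<open>Otherwise \<open>a'\<close> would precede \<open>a\<close> in the voter's list.\<close>
lemma first_choice_seed_in_gap:
  assumes "S \<subseteq> {1..n}" "s \<in> {1..n}" "a' \<in> S" "a' < a" "first_choice n s S = a"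
  shows "a' < s \<and> s \<le> a"
proof (rule ccontr)
  have a: "a \<in> S" using first_choice_least(1)[OF assms(1,2)] assms(3,5) by auto
  assume "\<not> (a' < s \<and> s \<le> a)"
  then have "pos n s a' < pos n s a" using assms a by (auto simp: pos_eq_if)
  moreover have "pos n s a \<le> pos n s a'" using first_choice_least(2)[OF assms(1,2)] assms by auto
  ultimately show False by simp
qed

lemma first_choice_seed_near:
  assumes "S \<subseteq> {1..n}" "s \<in> {1..n}" "a' \<in> S" "a' < a" "a \<le> a' + 2" "first_choice n s S = a"
  shows "s = a \<or> s = a - 1"
  using first_choice_seed_in_gap[OF assms(1-4,6)] assms(5) by linarith

locale A1_partition =
  fixes n l :: nat
  assumes even_n: "even n" and two_le_l: "2 \<le> l" and double_l_less: "2 * l < n"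
begin

lemma n_ge: "2 * l + 2 \<le> n"
  using even_n double_l_less by presburger

lemma mem_A1_iff: "x \<in> A1 n l \<longleftrightarrow> x \<in> {1..l} \<or> (l + 2 \<le> x \<and> x \<le> n - l \<and> even (x - l))"
proof
  assume "x \<in> A1 n l"
  then show "x \<in> {1..l} \<or> (l + 2 \<le> x \<and> x \<le> n - l \<and> even (x - l))"
    unfolding A1_def using n_ge by auto
next
  assume x: "x \<in> {1..l} \<or> (l + 2 \<le> x \<and> x \<le> n - l \<and> even (x - l))"
  show "x \<in> A1 n l"
  proof (cases "x \<in> {1..l}")
    case False
    with x have x': "l + 2 \<le> x" "x \<le> n - l" "even (x - l)" by auto
    from x'(3) obtain i where "x - l = 2 * i" by (rule evenE)
    with x' have "x = l + 2 * i" "1 \<le> i" "i \<le> (n - 2 * l) div 2" by linarith+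
    then show ?thesis unfolding A1_def by blast
  qed (simp add: A1_def)
qed

lemma A1_subset: "A1 n l \<subseteq> {1..n}"
  using mem_A1_iff n_ge by fastforce

lemma B1_subset: "B1 n l \<subseteq> {1..n}"
  unfolding B1_def by blast

lemma one_in_A1: "1 \<in> A1 n l"
  using mem_A1_iff two_le_l by auto

lemma one_notin_B1: "1 \<notin> B1 n l"
  using one_in_A1 unfolding B1_def by blast

lemma top_in_B1: "n - l < x \<Longrightarrow> x \<le> n \<Longrightarrow> x \<in> B1 n l"
  using n_ge by (auto simp: B1_def mem_A1_iff)

lemma Suc_l_in_B1: "l + 1 \<in> B1 n l"
  using n_ge by (auto simp: B1_def mem_A1_iff)

lemma n_minus_l_in_A1: "n - l \<in> A1 n l"
  unfolding mem_A1_iff using n_ge even_n by auto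

lemma A1_bounds: "x \<in> A1 n l \<Longrightarrow> 1 \<le> x \<and> x \<le> n - l"
  unfolding mem_A1_iff using n_ge by auto

lemma B1_bounds: "x \<in> B1 n l \<Longrightarrow> l + 1 \<le> x \<and> x \<le> n"
  by (auto simp: B1_def mem_A1_iff)

lemma A1_gap: "a \<in> A1 n l \<Longrightarrow> a \<noteq> 1 \<Longrightarrow> \<exists>a'\<in>A1 n l. a' < a \<and> a \<le> a' + 2"
proof (cases "a \<le> l + 2")
  case True
  assume "a \<in> A1 n l" "a \<noteq> 1"
  with True show ?thesis
    by (intro bexI[of _ "min (a - 1) l"]) (use two_le_l in \<open>auto simp: mem_A1_iff\<close>)
next
  case False
  assume "a \<in> A1 n l"
  with False have a: "l + 2 < a" "a \<le> n - l" "even (a - l)" by (auto simp: mem_A1_iff)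
  then have "l + 4 \<le> a" "even (a - 2 - l)" by presburger+
  with a have "a - 2 \<in> A1 n l" unfolding mem_A1_iff by linarith
  then show ?thesis using a by (intro bexI[of _ "a - 2"]) auto
qed

text \<open>The gap rests on the parity of \<open>n\<close>: for \<open>b = n - l + 1\<close> the candidate \<open>b - 2\<close> lies at odd
  distance \<open>n - 2 * l - 1\<close> from \<open>l\<close>, so it belongs to \<open>B1 n l\<close>.\<close>
lemma B1_gap: "b \<in> B1 n l \<Longrightarrow> b \<noteq> l + 1 \<Longrightarrow> \<exists>b'\<in>B1 n l. b' < b \<and> b \<le> b' + 2"
proof (cases "n - l + 1 < b")
  case True
  assume "b \<in> B1 n l"
  then have "b - 1 \<in> B1 n l" by (intro top_in_B1) (use True B1_bounds in force)+
  then show ?thesis using True by (intro bexI[of _ "b - 1"]) auto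
next
  case False
  assume b: "b \<in> B1 n l" "b \<noteq> l + 1"
  then have b_ge: "l + 2 \<le> b" using B1_bounds by fastforce
  have "odd (b - l)"
  proof (cases "b = n - l + 1")
    case True
    then have "b - l = (n - 2 * l) + 1" using n_ge by simp
    then show ?thesis using even_n by simp
  next
    case False
    then show ?thesis using b b_ge \<open>\<not> n - l + 1 < b\<close> by (auto simp: B1_def mem_A1_iff)
  qed
  with b_ge have "l + 3 \<le> b" "odd (b - 2 - l)"
    by (cases "b = l + 2"; simp add: even_diff_nat)+
  then have "b - 2 \<in> B1 n l"
    using B1_bounds[OF b(1)] by (auto simp: B1_def mem_A1_iff)
  then show ?thesis using b_ge by (intro bexI[of _ "b - 2"]) auto
qed

lemma first_choice_A1_eq_1_iff:
  assumes s: "s \<in> {1..n}"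
  shows "first_choice n s (A1 n l) = 1 \<longleftrightarrow> s = 1 \<or> n - l < s"
proof
  assume fc: "first_choice n s (A1 n l) = 1"
  show "s = 1 \<or> n - l < s"
  proof (rule ccontr)
    assume "\<not> (s = 1 \<or> n - l < s)"
    then have "pos n s (n - l) < pos n s 1" using s n_ge by (auto simp: pos_eq_if)
    moreover have "pos n s 1 \<le> pos n s (n - l)"
      using first_choice_least(2)[OF A1_subset s] fc n_minus_l_in_A1 by fastforce
    ultimately show False by simp
  qed
next
  assume "s = 1 \<or> n - l < s"
  then show "first_choice n s (A1 n l) = 1"
    using s n_ge A1_bounds
    by (intro first_choice_eqI[OF A1_subset s one_in_A1]) (fastforce simp: pos_eq_if)
qed

lemma first_choice_B1_eq_Suc_l_iff:
  assumes s: "s \<in> {1..n}"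
  shows "first_choice n s (B1 n l) = l + 1 \<longleftrightarrow> s \<le> l + 1"
proof
  assume fc: "first_choice n s (B1 n l) = l + 1"
  show "s \<le> l + 1"
  proof (rule ccontr)
    assume "\<not> s \<le> l + 1"
    then have "pos n s n < pos n s (l + 1)" using s n_ge by (auto simp: pos_eq_if)
    moreover have "pos n s (l + 1) \<le> pos n s n"
      using first_choice_least(2)[OF B1_subset s] fc top_in_B1[of n] two_le_l n_ge Suc_l_in_B1
      by fastforce
    ultimately show False by simp
  qed
next
  assume "s \<le> l + 1"
  then show "first_choice n s (B1 n l) = l + 1"
    using s n_ge B1_bounds
    by (intro first_choice_eqI[OF B1_subset s Suc_l_in_B1]) (fastforce simp: pos_eq_if)
qed

lemma first_choice_final:
  assumes s: "s \<in> {1..n}"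
  shows "first_choice n s {1, l + 1} = (if 2 \<le> s \<and> s \<le> l + 1 then l + 1 else 1)"
  using s n_ge by (intro first_choice_eqI) (auto simp: pos_eq_if)

end

lemma Xi_le: "Xi n m seed S i \<le> m"
proof -
  have "Xi n m seed S i \<le> card {..<m}" unfolding Xi_def by (rule card_mono) auto
  then show ?thesis by simp
qed

lemma Xi_pos: "j < m \<Longrightarrow> first_choice n (seed j) S = i \<Longrightarrow> 0 < Xi n m seed S i"
  unfolding Xi_def by (subst card_gt_0_iff) auto

lemma wins_in_le_1_imp_unanimous:
  assumes seeds: "\<forall>j<m. seed j \<in> {1..n}" and S: "S \<subseteq> {1..n}"
    and win: "wins_in n m seed S a" and le1: "Xi n m seed S a \<le> 1"
  shows "Xi n m seed S a = m"
proof -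
  have "first_choice n (seed j) S = a" if j: "j < m" for j
  proof (rule ccontr)
    let ?y = "first_choice n (seed j) S"
    assume "?y \<noteq> a"
    moreover have "?y \<in> S" using first_choice_least(1)[OF S] seeds j win
      unfolding wins_in_def by blast
    ultimately have "Xi n m seed S ?y < Xi n m seed S a" using win unfolding wins_in_def by blast
    with le1 Xi_pos[of j m n seed S ?y] j show False by simp
  qed
  then have "{j \<in> {..<m}. first_choice n (seed j) S = a} = {..<m}" by blast
  then show ?thesis unfolding Xi_def by simp
qed

lemma wins_in_two_votes:
  assumes "\<forall>j<m. seed j \<in> {1..n}" "S \<subseteq> {1..n}" "wins_in n m seed S a" "2 \<le> m"
  shows "2 \<le> Xi n m seed S a"
  using wins_in_le_1_imp_unanimous[OF assms(1-3)] assms(4) by fastforce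

lemma Xi_single_voter: "0 < Xi n 1 seed S i \<Longrightarrow> first_choice n (seed 0) S = i"
  unfolding Xi_def by (auto simp: card_gt_0_iff)

lemma wins_in_single_voter:
  assumes "seed 0 \<in> {1..n}" "S \<subseteq> {1..n}" "wins_in n 1 seed S a"
  shows "first_choice n (seed 0) S = a"
  using wins_in_le_1_imp_unanimous[of 1 seed n S a] assms Xi_le[of n 1 seed S a]
  by (intro Xi_single_voter) simp

lemma wins_two_round_single_voter:
  assumes seed: "seed 0 \<in> A \<union> B" and A: "A \<subseteq> {1..n}" and B: "B \<subseteq> {1..n}"
    and win: "wins_two_round n 1 seed A B c"
  shows "c = seed 0"
proof -
  obtain a b where a: "wins_in n 1 seed A a" and b: "wins_in n 1 seed B b"
    and final: "c \<in> {a, b}" "0 < Xi n 1 seed {a, b} c"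
    using win unfolding wins_two_round_def by auto
  have s: "seed 0 \<in> {1..n}" using seed A B by blast
  have ab: "{a, b} \<subseteq> {1..n}" using a b A B unfolding wins_in_def by blast
  have "seed 0 = a \<or> seed 0 = b"
    using seed first_choice_self[OF A] first_choice_self[OF B]
      wins_in_single_voter[OF s A a] wins_in_single_voter[OF s B b] by (metis UnE)
  then have "first_choice n (seed 0) {a, b} = seed 0" using first_choice_self[OF ab] by blast
  then show ?thesis using Xi_single_voter[OF final(2)] by simp
qed

definition seed_class :: "nat \<Rightarrow> nat \<Rightarrow> nat \<Rightarrow> nat" where
  "seed_class n l s = (if n - l < s then 1 else if 2 \<le> s \<and> s \<le> l + 1 then 2 else 0)"

definition class_count :: "nat \<Rightarrow> (nat \<Rightarrow> nat) \<Rightarrow> nat \<Rightarrow> nat" where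
  "class_count m c v = card {j \<in> {..<m}. c j = v}"

definition one_wins_pattern :: "nat \<Rightarrow> (nat \<Rightarrow> nat) \<Rightarrow> bool" where
  "one_wins_pattern m c \<longleftrightarrow>
     2 \<le> class_count m c 1 \<and> 2 \<le> class_count m c 2 \<and> 2 * class_count m c 2 < m"

definition seed_collision :: "nat \<Rightarrow> (nat \<Rightarrow> nat) \<Rightarrow> bool" where
  "seed_collision m seed \<longleftrightarrow> (\<exists>j<m. seed j = 1) \<or>
     (\<exists>j<m. \<exists>j'<m. j \<noteq> j' \<and> seed j \<le> seed j' \<and> seed j' \<le> seed j + 1)"

lemma one_wins_pattern_cong:
  assumes "\<And>j. j \<in> {..<m} \<Longrightarrow> c j = c' j"
  shows "one_wins_pattern m c = one_wins_pattern m c'"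
proof -
  have "class_count m c v = class_count m c' v" for v
    unfolding class_count_def using assms by (intro arg_cong[where f = card] Collect_cong) auto
  then show ?thesis unfolding one_wins_pattern_def by simp
qed

lemma Xi_le_1_if_no_collision:
  assumes "\<not> seed_collision m seed"
    and "\<And>j. j < m \<Longrightarrow> first_choice n (seed j) S = a \<Longrightarrow> seed j = a \<or> seed j = a - 1"
  shows "Xi n m seed S a \<le> 1"
proof -
  let ?V = "{j \<in> {..<m}. first_choice n (seed j) S = a}"
  have "x = y" if xy: "x \<in> ?V" "y \<in> ?V" for x y
  proof (rule ccontr)
    assume "x \<noteq> y"
    have "seed x \<in> {a - 1, a}" "seed y \<in> {a - 1, a}" using assms(2) xy by auto
    then have "seed x \<le> seed y \<and> seed y \<le> seed x + 1 \<or> seed y \<le> seed x \<and> seed x \<le> seed y + 1"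
      by auto
    then show False using assms(1) \<open>x \<noteq> y\<close> xy unfolding seed_collision_def by blast
  qed
  then show ?thesis unfolding Xi_def One_nat_def by (subst card_le_Suc0_iff_eq) auto
qed

context A1_partition
begin

lemma Xi_A1_one:
  assumes "\<forall>j<m. seed j \<in> {1..n}" "\<not> seed_collision m seed"
  shows "Xi n m seed (A1 n l) 1 = class_count m (seed_class n l \<circ> seed) 1"
  unfolding Xi_def class_count_def
  using assms first_choice_A1_eq_1_iff n_ge
  by (intro arg_cong[where f = card]) (auto simp: seed_class_def seed_collision_def)

lemma Xi_B1_Suc_l:
  assumes "\<forall>j<m. seed j \<in> {1..n}" "\<not> seed_collision m seed"
  shows "Xi n m seed (B1 n l) (l + 1) = class_count m (seed_class n l \<circ> seed) 2"
  unfolding Xi_def class_count_def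
  using assms first_choice_B1_eq_Suc_l_iff n_ge
  by (intro arg_cong[where f = card]) (force simp: seed_class_def seed_collision_def)

lemma Xi_final_Suc_l:
  assumes "\<forall>j<m. seed j \<in> {1..n}"
  shows "Xi n m seed {1, l + 1} (l + 1) = class_count m (seed_class n l \<circ> seed) 2"
  unfolding Xi_def class_count_def
  using assms first_choice_final n_ge two_le_l
  by (intro arg_cong[where f = card]) (auto simp: seed_class_def split: if_splits)

lemma Xi_final_one:
  assumes "\<forall>j<m. seed j \<in> {1..n}"
  shows "Xi n m seed {1, l + 1} 1 = m - class_count m (seed_class n l \<circ> seed) 2"
proof -
  let ?F = "\<lambda>c. {j \<in> {..<m}. first_choice n (seed j) {1, l + 1} = c}"
  have "?F 1 = {..<m} - ?F (l + 1)"
    using assms first_choice_final two_le_l by auto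
  moreover have "card ({..<m} - ?F (l + 1)) = m - card (?F (l + 1))"
    by (subst card_Diff_subset) auto
  ultimately show ?thesis using Xi_final_Suc_l[OF assms] unfolding Xi_def by simp
qed

lemma Xi_A1_le_1:
  assumes "\<forall>j<m. seed j \<in> {1..n}" "\<not> seed_collision m seed" "a \<in> A1 n l" "a \<noteq> 1"
  shows "Xi n m seed (A1 n l) a \<le> 1"
proof (rule Xi_le_1_if_no_collision[OF assms(2)])
  obtain a' where "a' \<in> A1 n l" "a' < a" "a \<le> a' + 2" using A1_gap assms(3,4) by blast
  then show "seed j = a \<or> seed j = a - 1" if "j < m" "first_choice n (seed j) (A1 n l) = a" for j
    using first_choice_seed_near[OF A1_subset] assms(1) that by blast
qed

lemma Xi_B1_le_1:
  assumes "\<forall>j<m. seed j \<in> {1..n}" "\<not> seed_collision m seed" "b \<in> B1 n l" "b \<noteq> l + 1"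
  shows "Xi n m seed (B1 n l) b \<le> 1"
proof (rule Xi_le_1_if_no_collision[OF assms(2)])
  obtain b' where "b' \<in> B1 n l" "b' < b" "b \<le> b' + 2" using B1_gap assms(3,4) by blast
  then show "seed j = b \<or> seed j = b - 1" if "j < m" "first_choice n (seed j) (B1 n l) = b" for j
    using first_choice_seed_near[OF B1_subset] assms(1) that by blast
qed

lemma wins_two_round_if_pattern:
  assumes seeds: "\<forall>j<m. seed j \<in> {1..n}" and no_coll: "\<not> seed_collision m seed"
    and pattern: "one_wins_pattern m (seed_class n l \<circ> seed)"
  shows "wins_two_round n m seed (A1 n l) (B1 n l) 1"
proof -
  have "wins_in n m seed (A1 n l) 1"
    using one_in_A1 Xi_A1_le_1[OF seeds no_coll] Xi_A1_one[OF seeds no_coll] pattern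
    unfolding wins_in_def one_wins_pattern_def by fastforce
  moreover have "wins_in n m seed (B1 n l) (l + 1)"
    using Suc_l_in_B1 Xi_B1_le_1[OF seeds no_coll] Xi_B1_Suc_l[OF seeds no_coll] pattern
    unfolding wins_in_def one_wins_pattern_def by fastforce
  moreover have "Xi n m seed {1, l + 1} (l + 1) < Xi n m seed {1, l + 1} 1"
    using Xi_final_one[OF seeds] Xi_final_Suc_l[OF seeds] pattern
    unfolding one_wins_pattern_def by linarith
  ultimately show ?thesis unfolding wins_two_round_def by blast
qed

lemma pattern_if_wins_two_round:
  assumes seeds: "\<forall>j<m. seed j \<in> {1..n}" and no_coll: "\<not> seed_collision m seed"
    and win: "wins_two_round n m seed (A1 n l) (B1 n l) 1"
  shows "one_wins_pattern m (seed_class n l \<circ> seed)"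
proof -
  obtain b where winA: "wins_in n m seed (A1 n l) 1" and winB: "wins_in n m seed (B1 n l) b"
    and final: "Xi n m seed {1, b} b < Xi n m seed {1, b} 1"
    using win one_notin_B1 unfolding wins_two_round_def wins_in_def by blast
  have "m \<noteq> 0" using final Xi_le[of n m seed "{1, b}" 1] by linarith
  moreover have "m \<noteq> 1"
  proof
    assume m1: "m = 1"
    then have "seed 0 \<in> A1 n l \<union> B1 n l" using seeds unfolding B1_def by auto
    then have "seed 0 = 1"
      using wins_two_round_single_voter[OF _ A1_subset B1_subset, of seed 1] win m1 by simp
    then have "\<exists>j<m. seed j = 1" using m1 by (intro exI[of _ 0]) simp
    then show False using no_coll unfolding seed_collision_def by blast
  qed
  ultimately have m2: "2 \<le> m" by linarith
  have b: "b = l + 1"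
    using Xi_B1_le_1[OF seeds no_coll] wins_in_two_votes[OF seeds B1_subset winB m2] winB
    unfolding wins_in_def by fastforce
  have "2 \<le> class_count m (seed_class n l \<circ> seed) 1"
    using wins_in_two_votes[OF seeds A1_subset winA m2] Xi_A1_one[OF seeds no_coll] by simp
  moreover have "2 \<le> class_count m (seed_class n l \<circ> seed) 2"
    using wins_in_two_votes[OF seeds B1_subset winB m2] Xi_B1_Suc_l[OF seeds no_coll] b by simp
  moreover have "2 * class_count m (seed_class n l \<circ> seed) 2 < m"
    using final Xi_final_one[OF seeds] Xi_final_Suc_l[OF seeds] b by simp
  ultimately show ?thesis unfolding one_wins_pattern_def by blast
qed

lemma wins_two_round_iff_pattern:
  assumes "\<forall>j<m. seed j \<in> {1..n}" "\<not> seed_collision m seed"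
  shows "wins_two_round n m seed (A1 n l) (B1 n l) 1 \<longleftrightarrow> one_wins_pattern m (seed_class n l \<circ> seed)"
  using wins_two_round_if_pattern[OF assms] pattern_if_wins_two_round[OF assms] by blast

end

lemma PiE_preimage_eq_UN_fibres:
  assumes "f ` S \<subseteq> V" and P: "\<And>c c'. (\<And>j. j \<in> I \<Longrightarrow> c j = c' j) \<Longrightarrow> P c = P c'"
  shows "{x \<in> I \<rightarrow>\<^sub>E S. P (f \<circ> x)}
       = (\<Union>c\<in>{c \<in> I \<rightarrow>\<^sub>E V. P c}. PiE I (\<lambda>j. {s \<in> S. f s = c j}))"
proof (intro equalityI subsetI)
  fix x assume "x \<in> {x \<in> I \<rightarrow>\<^sub>E S. P (f \<circ> x)}"
  then have x: "x \<in> I \<rightarrow>\<^sub>E S" "P (f \<circ> x)" by auto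
  let ?c = "restrict (f \<circ> x) I"
  have "P ?c = P (f \<circ> x)" by (rule P) simp
  then have "P ?c" using x(2) by blast
  moreover have "?c \<in> I \<rightarrow>\<^sub>E V" using x(1) assms(1) by (auto simp: PiE_iff)
  moreover have "x \<in> PiE I (\<lambda>j. {s \<in> S. f s = ?c j})" using x(1) by (auto simp: PiE_iff)
  ultimately show "x \<in> (\<Union>c\<in>{c \<in> I \<rightarrow>\<^sub>E V. P c}. PiE I (\<lambda>j. {s \<in> S. f s = c j}))"
    by (intro UN_I[of ?c]) simp_all
next
  fix x assume "x \<in> (\<Union>c\<in>{c \<in> I \<rightarrow>\<^sub>E V. P c}. PiE I (\<lambda>j. {s \<in> S. f s = c j}))"
  then obtain c where "P c" and x: "x \<in> PiE I (\<lambda>j. {s \<in> S. f s = c j})" by auto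
  have "P c = P (f \<circ> x)" by (rule P) (use x in \<open>auto simp: PiE_iff\<close>)
  moreover have "x \<in> I \<rightarrow>\<^sub>E S" using x by (auto simp: PiE_iff)
  ultimately show "x \<in> {x \<in> I \<rightarrow>\<^sub>E S. P (f \<circ> x)}" using \<open>P c\<close> by simp
qed

lemma disjoint_family_on_fibres:
  "disjoint_family_on (\<lambda>c. PiE I (\<lambda>j. {s \<in> S. f s = c j})) (I \<rightarrow>\<^sub>E V)"
  unfolding disjoint_family_on_def
proof (intro ballI impI)
  fix c c' assume c: "c \<in> I \<rightarrow>\<^sub>E V" "c' \<in> I \<rightarrow>\<^sub>E V" "c \<noteq> c'"
  then obtain j where j: "c j \<noteq> c' j" by (meson ext)
  with c have "j \<in> I" using PiE_arb[of c I "\<lambda>_. V" j] PiE_arb[of c' I "\<lambda>_. V" j] by auto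
  with j show "PiE I (\<lambda>j. {s \<in> S. f s = c j}) \<inter> PiE I (\<lambda>j. {s \<in> S. f s = c' j}) = {}"
    by (auto simp: PiE_iff)
qed

lemma card_PiE_preimage:
  assumes "finite I" "finite S" "finite V" "f ` S \<subseteq> V"
    and "\<And>c c'. (\<And>j. j \<in> I \<Longrightarrow> c j = c' j) \<Longrightarrow> P c = P c'"
  shows "card {x \<in> I \<rightarrow>\<^sub>E S. P (f \<circ> x)}
       = (\<Sum>c\<in>{c \<in> I \<rightarrow>\<^sub>E V. P c}. \<Prod>j\<in>I. card {s \<in> S. f s = c j})"
proof -
  have "{x \<in> I \<rightarrow>\<^sub>E S. P (f \<circ> x)}
      = (\<Union>c\<in>{c \<in> I \<rightarrow>\<^sub>E V. P c}. PiE I (\<lambda>j. {s \<in> S. f s = c j}))"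
    using assms(4,5) by (rule PiE_preimage_eq_UN_fibres)
  also have "card \<dots> = (\<Sum>c\<in>{c \<in> I \<rightarrow>\<^sub>E V. P c}. card (PiE I (\<lambda>j. {s \<in> S. f s = c j})))"
  proof (rule card_UN_disjoint')
    show "disjoint_family_on (\<lambda>c. PiE I (\<lambda>j. {s \<in> S. f s = c j})) {c \<in> I \<rightarrow>\<^sub>E V. P c}"
      by (rule disjoint_family_on_mono[OF _ disjoint_family_on_fibres]) blast
    show "finite {c \<in> I \<rightarrow>\<^sub>E V. P c}"
      using assms(1,3) by (intro finite_subset[OF _ finite_PiE[of I "\<lambda>_. V"]]) auto
  qed (use assms(1,2) in \<open>simp add: finite_PiE\<close>)
  finally show ?thesis using assms(1,2) by (simp add: card_PiE)
qed

lemma card_le_if_coordinate_determined: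
  assumes X: "X \<subseteq> {..<m} \<rightarrow>\<^sub>E T" "finite T" and j: "j < m"
    and det: "\<And>x y. x \<in> X \<Longrightarrow> y \<in> X \<Longrightarrow> (\<And>i. i \<noteq> j \<Longrightarrow> x i = y i) \<Longrightarrow> x j = y j"
  shows "card X \<le> card T ^ (m - 1)"
proof -
  have "inj_on (\<lambda>x. x(j := undefined)) X"
  proof (rule inj_onI)
    fix x y assume xy: "x \<in> X" "y \<in> X" "x(j := undefined) = y(j := undefined)"
    then have off: "x i = y i" if "i \<noteq> j" for i using that by (metis fun_upd_other)
    then have "x j = y j" by (rule det[OF xy(1,2)])
    with off show "x = y" by (metis ext)
  qed
  moreover have "(\<lambda>x. x(j := undefined)) ` X \<subseteq> ({..<m} - {j}) \<rightarrow>\<^sub>E T"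
    using X(1) by (auto simp: PiE_def Pi_def extensional_def)
  ultimately have "card X \<le> card (({..<m} - {j}) \<rightarrow>\<^sub>E T)"
    using X(2) by (intro card_inj_on_le) (auto intro: finite_PiE)
  also have "\<dots> = card T ^ (m - 1)" using j by (simp add: card_PiE)
  finally show ?thesis .
qed

lemma card_seed_collision_le:
  "card {x \<in> {..<m} \<rightarrow>\<^sub>E {1..n}. seed_collision m x} \<le> (m + 2 * m * m) * n ^ (m - 1)"
proof -
  let ?O = "{..<m} \<rightarrow>\<^sub>E {1..n}"
  let ?I = "{..<m} \<times> {..<m} \<times> {..1::nat}"
  let ?E1 = "\<lambda>j. {x \<in> ?O. x j = 1}"
  let ?E2 = "\<lambda>(j, j', d). {x \<in> ?O. j \<noteq> j' \<and> x j' = x j + d}"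
  have "{x \<in> ?O. seed_collision m x} \<subseteq> (\<Union>j<m. ?E1 j) \<union> (\<Union>p\<in>?I. ?E2 p)"
  proof
    fix x assume x: "x \<in> {x \<in> ?O. seed_collision m x}"
    then consider j where "j < m" "x j = 1"
      | j j' where "j < m" "j' < m" "j \<noteq> j'" "x j \<le> x j'" "x j' \<le> x j + 1"
      unfolding seed_collision_def by blast
    then show "x \<in> (\<Union>j<m. ?E1 j) \<union> (\<Union>p\<in>?I. ?E2 p)"
    proof cases
      case (2 j j')
      then have "(j, j', x j' - x j) \<in> ?I" "x \<in> ?E2 (j, j', x j' - x j)" using x by auto
      then show ?thesis by blast
    qed (use x in blast)
  qed
  moreover have fin: "finite ?O" by (simp add: finite_PiE)
  ultimately have "card {x \<in> ?O. seed_collision m x} \<le> card (\<Union>j<m. ?E1 j) + card (\<Union>p\<in>?I. ?E2 p)"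
    by (intro order_trans[OF card_mono card_Un_le]) auto
  also have "\<dots> \<le> (\<Sum>j<m. card (?E1 j)) + (\<Sum>p\<in>?I. card (?E2 p))"
    using fin by (intro add_mono card_UN_le) auto
  also have "\<dots> \<le> m * n ^ (m - 1) + card ?I * n ^ (m - 1)"
  proof (rule add_mono)
    have "card (?E1 j) \<le> n ^ (m - 1)" if "j < m" for j
      using card_le_if_coordinate_determined[of "?E1 j" m "{1..n}" j] that by auto
    then show "(\<Sum>j<m. card (?E1 j)) \<le> m * n ^ (m - 1)"
      using sum_bounded_above[of "{..<m}" "\<lambda>j. card (?E1 j)" "n ^ (m - 1)"] by simp
    have "card (?E2 p) \<le> n ^ (m - 1)" if "p \<in> ?I" for p
      using card_le_if_coordinate_determined[of "?E2 p" m "{1..n}" "fst (snd p)"] that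
      by (cases p) auto
    then show "(\<Sum>p\<in>?I. card (?E2 p)) \<le> card ?I * n ^ (m - 1)"
      using sum_bounded_above[of ?I "\<lambda>p. card (?E2 p)" "n ^ (m - 1)"] by simp
  qed
  also have "\<dots> = (m + 2 * m * m) * n ^ (m - 1)" by (simp add: algebra_simps)
  finally show ?thesis .
qed

definition class_weight :: "real \<Rightarrow> nat \<Rightarrow> real" where
  "class_weight x v = (if v = 0 then 1 - 2 * x else x)"

text \<open>The probability of \<open>one_wins_pattern\<close> when the classes of the \<open>m\<close> voters are independent,
  each equal to \<open>1\<close> and to \<open>2\<close> with probability \<open>x\<close>.\<close>
definition pattern_prob :: "nat \<Rightarrow> real \<Rightarrow> real" where
  "pattern_prob m x =
     (\<Sum>c\<in>{c \<in> {..<m} \<rightarrow>\<^sub>E {0, 1, 2}. one_wins_pattern m c}. \<Prod>j<m. class_weight x (c j))"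

context A1_partition
begin

lemma card_seed_class:
  "card {s \<in> {1..n}. seed_class n l s = v} = (if v = 0 then n - 2 * l else if v \<le> 2 then l else 0)"
proof -
  have "{s \<in> {1..n}. seed_class n l s = 1} = {n - l<..n}"
    "{s \<in> {1..n}. seed_class n l s = 2} = {2..l + 1}"
    "{s \<in> {1..n}. seed_class n l s = 0} = {1} \<union> {l + 2..n - l}"
    "v > 2 \<Longrightarrow> {s \<in> {1..n}. seed_class n l s = v} = {}"
    unfolding seed_class_def using n_ge by auto
  moreover have "card ({1} \<union> {l + 2..n - l}) = n - 2 * l"
    using n_ge by (subst card_Un_disjoint) auto
  ultimately show ?thesis using n_ge
    by (cases "v = 0 \<or> v = 1 \<or> v = 2") (auto simp: numeral_2_eq_2)
qed

lemma card_pattern_seeds: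
  "real (card {seed \<in> {..<m} \<rightarrow>\<^sub>E {1..n}. one_wins_pattern m (seed_class n l \<circ> seed)}) / real n ^ m
     = pattern_prob m (real l / real n)"
proof -
  let ?G = "{c \<in> {..<m} \<rightarrow>\<^sub>E {0, 1, 2}. one_wins_pattern m c}"
  let ?N = "\<lambda>v. card {s \<in> {1..n}. seed_class n l s = v}"
  have weight: "real (?N v) / real n = class_weight (real l / real n) v" if "v \<in> {0, 1, 2}" for v
  proof -
    have "real (?N v) = (if v = 0 then real n - 2 * real l else real l)"
      using card_seed_class[of v] that n_ge by (auto simp: of_nat_diff)
    then show ?thesis using n_ge by (simp add: class_weight_def diff_divide_distrib)
  qed
  have "card {seed \<in> {..<m} \<rightarrow>\<^sub>E {1..n}. one_wins_pattern m (seed_class n l \<circ> seed)}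
      = (\<Sum>c\<in>?G. \<Prod>j<m. ?N (c j))"
    by (rule card_PiE_preimage[OF _ _ _ _ one_wins_pattern_cong]) (auto simp: seed_class_def)
  then have "real (card {seed \<in> {..<m} \<rightarrow>\<^sub>E {1..n}. one_wins_pattern m (seed_class n l \<circ> seed)}) / real n ^ m
      = (\<Sum>c\<in>?G. \<Prod>j<m. real (?N (c j)) / real n)"
    by (simp add: sum_divide_distrib prod_dividef)
  also have "\<dots> = pattern_prob m (real l / real n)"
    unfolding pattern_prob_def using weight by (intro sum.cong prod.cong) (auto simp: PiE_iff)
  finally show ?thesis .
qed

lemma p1_approx: "\<bar>p1 n m l - pattern_prob m (real l / real n)\<bar> \<le> real (m + 2 * m * m) / real n"
proof -
  let ?O = "{..<m} \<rightarrow>\<^sub>E {1..n}"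
  let ?W = "{seed \<in> ?O. wins_two_round n m seed (A1 n l) (B1 n l) 1}"
  let ?G = "{seed \<in> ?O. one_wins_pattern m (seed_class n l \<circ> seed)}"
  let ?D = "{seed \<in> ?O. seed_collision m seed}"
  have fin: "finite ?W" "finite ?G" "finite ?D" by (simp_all add: finite_PiE)
  have iff: "wins_two_round n m x (A1 n l) (B1 n l) 1 \<longleftrightarrow> one_wins_pattern m (seed_class n l \<circ> x)"
    if "x \<in> ?O" "\<not> seed_collision m x" for x
    using that by (intro wins_two_round_iff_pattern) (auto simp: PiE_iff)
  have "card ?W \<le> card (?G \<union> ?D)" "card ?G \<le> card (?W \<union> ?D)"
    using fin iff by (intro card_mono; auto)+
  then have "card ?W \<le> card ?G + card ?D" "card ?G \<le> card ?W + card ?D"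
    using card_Un_le le_trans by blast+
  then have diff: "\<bar>real (card ?W) - real (card ?G)\<bar> \<le> real (card ?D)" by linarith
  have n_pos: "0 < real n" using n_ge by simp
  have bound: "real (card ?D) / real n ^ m \<le> real (m + 2 * m * m) / real n"
  proof (cases "m = 0")
    case False
    then have pow: "real n ^ m = real n ^ (m - 1) * real n" by (cases m) (simp_all add: mult.commute)
    have "real (card ?D) / real n ^ m \<le> real (m + 2 * m * m) * real n ^ (m - 1) / real n ^ m"
      using of_nat_mono[OF card_seed_collision_le[of m n]] by (intro divide_right_mono) simp_all
    also have "\<dots> = real (m + 2 * m * m) / real n" unfolding pow using n_pos by simp
    finally show ?thesis .
  qed (simp add: seed_collision_def)
  have "p1 n m l - pattern_prob m (real l / real n) = (real (card ?W) - real (card ?G)) / real n ^ m"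
    unfolding p1_def card_pattern_seeds[symmetric] by (simp add: diff_divide_distrib)
  then have "\<bar>p1 n m l - pattern_prob m (real l / real n)\<bar> = \<bar>real (card ?W) - real (card ?G)\<bar> / real n ^ m"
    by simp
  also have "\<dots> \<le> real (card ?D) / real n ^ m"
    using diff by (rule divide_right_mono) simp
  finally show ?thesis using bound by linarith
qed

end

definition arc_class :: "real \<Rightarrow> real \<Rightarrow> nat" where
  "arc_class \<eta> u = (if 1 - \<eta> < u \<and> u < 1 then 1 else if 0 < u \<and> u < \<eta> then 2 else 0)"

lemma arc_class_sets: "{u. arc_class \<eta> u = v} \<in> sets borel"
proof -
  have "{u. arc_class \<eta> u = v} = (if v = 1 then {1 - \<eta><..<1} else if v = 2 then {0<..<\<eta>} - {1 - \<eta><..<1}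
          else if v = 0 then UNIV - {1 - \<eta><..<1} - {0<..<\<eta>} else {})"
    unfolding arc_class_def by auto
  then show ?thesis by simp
qed

lemma measure_arc_class:
  assumes "0 < \<eta>" "\<eta> < 1 / 2" "v \<in> {0, 1, 2}"
  shows "measure (uniform_measure lborel {0..<1::real}) {u. arc_class \<eta> u = v} = class_weight \<eta> v"
proof -
  let ?\<mu> = "uniform_measure lborel {0..<1::real}"
  interpret prob_space ?\<mu> by (rule prob_space_uniform_measure) auto
  have \<mu>: "measure ?\<mu> A = measure lborel ({0..<1} \<inter> A)" if "A \<in> sets borel" for A
    using that by (subst measure_uniform_measure) auto
  have "{0..<1} \<inter> {u. arc_class \<eta> u = 1} = {1 - \<eta><..<1}" "{0..<1} \<inter> {u. arc_class \<eta> u = 2} = {0<..<\<eta>}"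
    unfolding arc_class_def using assms by auto
  then have m12: "measure ?\<mu> {u. arc_class \<eta> u = 1} = \<eta>" "measure ?\<mu> {u. arc_class \<eta> u = 2} = \<eta>"
    using \<mu>[OF arc_class_sets] assms by simp_all
  have "measure ?\<mu> (\<Union>v\<in>{0, 1, 2}. {u. arc_class \<eta> u = v})
      = (\<Sum>v\<in>{0, 1, 2}. measure ?\<mu> {u. arc_class \<eta> u = v})"
    by (rule finite_measure_finite_Union) (auto simp: disjoint_family_on_def arc_class_sets)
  moreover have "(\<Union>v\<in>{0::nat, 1, 2}. {u. arc_class \<eta> u = v}) = space ?\<mu>"
    unfolding arc_class_def by auto
  ultimately have "1 = measure ?\<mu> {u. arc_class \<eta> u = 0} + \<eta> + \<eta>"
    using m12 prob_space by simp
  then have "measure ?\<mu> {u. arc_class \<eta> u = 0} = 1 - 2 * \<eta>" using m12 by simp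
  with m12 assms(3) show ?thesis unfolding class_weight_def by auto
qed

lemma measure_unif_cube_arc_class_box:
  assumes eta: "0 < \<eta>" "\<eta> < 1 / 2" and c: "c \<in> {..<m} \<rightarrow>\<^sub>E {0, 1, 2}"
  shows "measure (unif_cube m) (PiE {..<m} (\<lambda>j. {u. arc_class \<eta> u = c j}))
       = (\<Prod>j<m. class_weight \<eta> (c j))"
proof -
  let ?\<mu> = "uniform_measure lborel {0..<1::real}"
  interpret P: product_prob_space "\<lambda>_. ?\<mu>" "{..<m}"
    by (rule product_prob_spaceI) (rule prob_space_uniform_measure, auto)
  have "c j \<in> {0, 1, 2}" if "j < m" for j using c that by (auto simp: PiE_iff)
  then have "emeasure (unif_cube m) (PiE {..<m} (\<lambda>j. {u. arc_class \<eta> u = c j}))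
      = (\<Prod>j<m. ennreal (class_weight \<eta> (c j)))"
    unfolding unif_cube_def using arc_class_sets measure_arc_class[OF eta]
    by (subst P.emeasure_PiM) (auto simp: P.M.emeasure_eq_measure intro!: prod.cong)
  also have "\<dots> = ennreal (\<Prod>j<m. class_weight \<eta> (c j))"
    using eta by (intro prod_ennreal) (auto simp: class_weight_def)
  finally show ?thesis
    unfolding measure_def using eta by (simp add: prod_nonneg class_weight_def)
qed

lemma p_inf_eq_pattern_prob:
  assumes eta: "0 < \<eta>" "\<eta> < 1 / 2"
  shows "p_inf m \<eta> = pattern_prob m \<eta>"
proof -
  let ?\<mu> = "uniform_measure lborel {0..<1::real}"
  let ?G = "{c \<in> {..<m} \<rightarrow>\<^sub>E {0, 1, 2}. one_wins_pattern m c}"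
  let ?box = "\<lambda>c. PiE {..<m} (\<lambda>j. {u \<in> UNIV. arc_class \<eta> u = c j})"
  interpret P: product_prob_space "\<lambda>_. ?\<mu>" "{..<m}"
    by (rule product_prob_spaceI) (rule prob_space_uniform_measure, auto)
  have M: "unif_cube m = PiM {..<m} (\<lambda>_. ?\<mu>)" unfolding unif_cube_def ..
  have counts: "N_arc m (1 - \<eta>) 1 U = class_count m (arc_class \<eta> \<circ> U) 1"
    "N_arc m 0 \<eta> U = class_count m (arc_class \<eta> \<circ> U) 2" for U
    unfolding N_arc_def class_count_def arc_class_def using eta
    by (auto intro!: arg_cong[where f = card])
  have half: "real a < real m / 2 \<longleftrightarrow> 2 * a < m" for a :: nat by linarith
  have "p_inf m \<eta> = measure (unif_cube m) {U \<in> {..<m} \<rightarrow>\<^sub>E UNIV. one_wins_pattern m (arc_class \<eta> \<circ> U)}"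
    unfolding p_inf_def one_wins_pattern_def counts half M space_PiM by simp
  also have "{U \<in> {..<m} \<rightarrow>\<^sub>E UNIV. one_wins_pattern m (arc_class \<eta> \<circ> U)} = (\<Union>c\<in>?G. ?box c)"
    by (rule PiE_preimage_eq_UN_fibres[OF _ one_wins_pattern_cong]) (auto simp: arc_class_def)
  also have "measure (unif_cube m) (\<Union>c\<in>?G. ?box c) = (\<Sum>c\<in>?G. measure (unif_cube m) (?box c))"
  proof (unfold M, rule P.finite_measure_finite_Union)
    show "finite ?G" by (intro finite_subset[OF _ finite_PiE[of "{..<m}" "\<lambda>_. {0, 1, 2}"]]) auto
    show "?box ` ?G \<subseteq> sets (PiM {..<m} (\<lambda>_. ?\<mu>))"
      using arc_class_sets by (intro image_subsetI sets_PiM_I_finite) auto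
    show "disjoint_family_on ?box ?G"
      by (rule disjoint_family_on_mono[OF _ disjoint_family_on_fibres]) blast
  qed
  also have "\<dots> = pattern_prob m \<eta>"
    unfolding pattern_prob_def using measure_unif_cube_arc_class_box[OF eta] by (intro sum.cong) auto
  finally show ?thesis .
qed

lemma sum_PiE_prod_eq_power:
  fixes g :: "'a \<Rightarrow> 'b :: comm_semiring_1"
  assumes "finite V"
  shows "(\<Sum>c\<in>{..<m} \<rightarrow>\<^sub>E V. \<Prod>j<m. g (c j)) = (\<Sum>v\<in>V. g v) ^ m"
  using prod_sum_PiE[of "{..<m}" "\<lambda>_. V" "\<lambda>_. g"] assms by simp

lemma prod_if_eq_power_class_count:
  "(\<Prod>j<m. if c j = v then a else 1 :: 'a :: comm_monoid_mult) = a ^ class_count m c v"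
proof -
  have "(\<Prod>j<m. if c j = v then a else 1) = (\<Prod>j\<in>{j \<in> {..<m}. c j = v}. a)"
    by (subst prod.inter_filter[symmetric]) auto
  then show ?thesis unfolding class_count_def by simp
qed

lemma sum_class_weight_power_count:
  assumes "v \<in> {1, 2}"
  shows "(\<Sum>c\<in>{..<m} \<rightarrow>\<^sub>E {0, 1, 2}. (\<Prod>j<m. class_weight x (c j)) * a ^ class_count m c v)
       = (1 - x + x * a) ^ m"
proof -
  have "(\<Sum>c\<in>{..<m} \<rightarrow>\<^sub>E {0, 1, 2}. (\<Prod>j<m. class_weight x (c j)) * a ^ class_count m c v)
      = (\<Sum>c\<in>{..<m} \<rightarrow>\<^sub>E {0, 1, 2}. \<Prod>j<m. class_weight x (c j) * (if c j = v then a else 1))"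
    by (simp add: prod.distrib prod_if_eq_power_class_count)
  also have "\<dots> = (\<Sum>u\<in>{0::nat, 1, 2}. class_weight x u * (if u = v then a else 1)) ^ m"
    by (rule sum_PiE_prod_eq_power) simp
  also have "(\<Sum>u\<in>{0::nat, 1, 2}. class_weight x u * (if u = v then a else 1)) = 1 - x + x * a"
    using assms by (auto simp: class_weight_def)
  finally show ?thesis .
qed

lemma sum_class_weight_eq_1:
  "(\<Sum>c\<in>{..<m::nat} \<rightarrow>\<^sub>E {0, 1, 2}. \<Prod>j<m. class_weight x (c j)) = 1"
  using sum_class_weight_power_count[where v = 1 and m = m and x = x and a = 1] by simp

lemma pattern_prob_le_1:
  assumes "0 \<le> x" "x \<le> 1 / 2"
  shows "pattern_prob m x \<le> 1"
proof -
  have "pattern_prob m x \<le> (\<Sum>c\<in>{..<m} \<rightarrow>\<^sub>E {0, 1, 2}. \<Prod>j<m. class_weight x (c j))"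
    unfolding pattern_prob_def using assms
    by (intro sum_mono2 prod_nonneg) (auto simp: finite_PiE class_weight_def)
  then show ?thesis using sum_class_weight_eq_1 by simp
qed

lemma pattern_prob_continuous:
  "(f \<longlongrightarrow> x) F \<Longrightarrow> ((\<lambda>k. pattern_prob m (f k)) \<longlongrightarrow> pattern_prob m x) F"
  unfolding pattern_prob_def class_weight_def
  by (intro tendsto_sum tendsto_prod) (auto intro!: tendsto_intros)

text \<open>Each way of failing \<open>one_wins_pattern\<close> is detected by one of three exponential moments
  (\<open>s \<le> 1\<close> for a small count, \<open>t \<ge> 1\<close> for a large one).\<close>
lemma pattern_failure_le_moments:
  fixes s t :: real
  assumes "\<not> one_wins_pattern m c" "0 < s" "s \<le> 1" "1 \<le> t"
  shows "1 \<le> s ^ class_count m c 1 / s + s ^ class_count m c 2 / s + (t\<^sup>2) ^ class_count m c 2 / t ^ m"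
proof -
  let ?k1 = "class_count m c 1" and ?k2 = "class_count m c 2"
  have nonneg: "0 \<le> s ^ ?k1 / s" "0 \<le> s ^ ?k2 / s" "0 \<le> (t\<^sup>2) ^ ?k2 / t ^ m"
    using assms by (auto intro!: divide_nonneg_pos)
  have small: "1 \<le> s ^ k / s" if "k \<le> 1" for k
    using power_decreasing[OF that, of s] assms by (simp add: le_divide_eq)
  consider "?k1 \<le> 1" | "?k2 \<le> 1" | "m \<le> 2 * ?k2"
    using assms(1) unfolding one_wins_pattern_def by linarith
  then show ?thesis
  proof cases
    case 3
    then have "t ^ m \<le> (t\<^sup>2) ^ ?k2"
      using assms by (auto simp flip: power_mult intro: power_increasing)
    then have "1 \<le> (t\<^sup>2) ^ ?k2 / t ^ m" using assms by (simp add: le_divide_eq)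
    then show ?thesis using nonneg by linarith
  qed (use small nonneg in \<open>fastforce+\<close>)
qed

lemma one_minus_pattern_prob_le:
  fixes x s t :: real
  assumes x: "0 \<le> x" "x \<le> 1 / 2" and s: "0 < s" "s \<le> 1" and t: "1 \<le> t"
  shows "1 - pattern_prob m x \<le> 2 * (1 - x + x * s) ^ m / s + ((1 - x + x * t\<^sup>2) / t) ^ m"
proof -
  let ?P = "{..<m} \<rightarrow>\<^sub>E {0::nat, 1, 2}"
  let ?w = "\<lambda>c. \<Prod>j<m. class_weight x (c j)"
  let ?B = "\<lambda>c. s ^ class_count m c 1 / s + s ^ class_count m c 2 / s + (t\<^sup>2) ^ class_count m c 2 / t ^ m"
  have fin: "finite ?P" by (simp add: finite_PiE)
  have w: "0 \<le> ?w c" for c using x by (intro prod_nonneg) (auto simp: class_weight_def)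
  have B: "0 \<le> ?B c" for c using s t by auto
  have "1 - pattern_prob m x = (\<Sum>c\<in>?P - {c \<in> ?P. one_wins_pattern m c}. ?w c)"
    unfolding pattern_prob_def sum_class_weight_eq_1[where m = m and x = x, symmetric] using fin
    by (subst sum_diff) auto
  also have "\<dots> \<le> (\<Sum>c\<in>?P - {c \<in> ?P. one_wins_pattern m c}. ?w c * ?B c)"
    using mult_left_mono[OF pattern_failure_le_moments[OF _ s t] w] by (intro sum_mono) simp
  also have "\<dots> \<le> (\<Sum>c\<in>?P. ?w c * ?B c)"
    using fin w B by (intro sum_mono2) auto
  also have "\<dots> = (\<Sum>c\<in>?P. ?w c * s ^ class_count m c 1) / s + (\<Sum>c\<in>?P. ?w c * s ^ class_count m c 2) / s
      + (\<Sum>c\<in>?P. ?w c * (t\<^sup>2) ^ class_count m c 2) / t ^ m"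
    by (simp add: distrib_left sum.distrib sum_divide_distrib)
  also have "\<dots> = 2 * (1 - x + x * s) ^ m / s + ((1 - x + x * t\<^sup>2) / t) ^ m"
    using sum_class_weight_power_count[where v = 1 and m = m and x = x and a = s]
      sum_class_weight_power_count[where v = 2 and m = m and x = x and a = s]
      sum_class_weight_power_count[where v = 2 and m = m and x = x and a = "t\<^sup>2"]
    by (simp add: power_divide)
  finally show ?thesis .
qed

lemma pattern_prob_tendsto_1:
  fixes m :: "nat \<Rightarrow> nat" and x :: "nat \<Rightarrow> real"
  assumes eta: "0 < \<eta>" "\<eta> < 1 / 2" and m: "filterlim m at_top sequentially" and x: "x \<longlonglongrightarrow> \<eta>"
  shows "(\<lambda>k. pattern_prob (m k) (x k)) \<longlonglongrightarrow> 1"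
proof -
  define e where "e = (2 * \<eta> + 1) / 4"
  define t where "t = 1 / (2 * e)"
  define \<rho> where "\<rho> = (1 - e + e * t\<^sup>2) / t"
  define q where "q = 1 - \<eta> / 4"
  \<comment> \<open>For \<open>\<eta> / 2 < x < e\<close> the moment bound with \<open>s = 1 / 2\<close> and this \<open>t\<close> has bases at most \<open>q\<close> and
    \<open>\<rho> = 1 / 2 + 2 * e * (1 - e)\<close>, both less than \<open>1\<close>.\<close>
  have e: "\<eta> < e" "e < 1 / 2" "0 < e" using eta by (auto simp: e_def)
  have t: "1 < t" using e by (simp add: t_def field_simps)
  have "4 * e * (1 - e + e * t\<^sup>2) = 4 * e * t - (2 * e - 1)\<^sup>2"
    using e by (simp add: t_def field_simps power2_eq_square)
  moreover have "0 < (2 * e - 1)\<^sup>2" using e by simp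
  ultimately have "4 * e * (1 - e + e * t\<^sup>2) < 4 * e * t" by linarith
  then have "1 - e + e * t\<^sup>2 < t" using e by (simp add: mult_less_cancel_left_pos)
  then have \<rho>: "0 \<le> \<rho>" "\<rho> < 1" unfolding \<rho>_def using e t by (auto intro!: divide_nonneg_pos)
  have q: "0 \<le> q" "q < 1" using eta by (auto simp: q_def)
  have bound: "1 - (4 * q ^ m k + \<rho> ^ m k) \<le> pattern_prob (m k) (x k)"
    if xk: "\<eta> / 2 < x k" "x k < e" for k
  proof -
    have x0: "0 \<le> x k" "x k \<le> 1 / 2" using xk e eta by auto
    have q_bound: "(1 - x k + x k * (1 / 2)) ^ m k \<le> q ^ m k"
      using xk x0 by (intro power_mono) (auto simp: q_def)
    have "x k * (t\<^sup>2 - 1) \<le> e * (t\<^sup>2 - 1)"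
      using xk t by (intro mult_right_mono) (auto simp: one_le_power)
    then have "(1 - x k + x k * t\<^sup>2) / t \<le> \<rho>"
      unfolding \<rho>_def using t by (intro divide_right_mono) (auto simp: algebra_simps)
    moreover have "0 \<le> (1 - x k + x k * t\<^sup>2) / t" using x0 t by (intro divide_nonneg_pos) auto
    ultimately have "((1 - x k + x k * t\<^sup>2) / t) ^ m k \<le> \<rho> ^ m k" by (rule power_mono)
    with q_bound show ?thesis
      using one_minus_pattern_prob_le[OF x0, of "1 / 2" t "m k"] t by simp
  qed
  have "(\<lambda>k. q ^ m k) \<longlonglongrightarrow> 0" "(\<lambda>k. \<rho> ^ m k) \<longlonglongrightarrow> 0"
    using filterlim_compose[OF LIMSEQ_power_zero[of q] m] filterlim_compose[OF LIMSEQ_power_zero[of \<rho>] m]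
      q \<rho> by simp_all
  then have "(\<lambda>k. 1 - (4 * q ^ m k + \<rho> ^ m k)) \<longlonglongrightarrow> 1 - (4 * 0 + 0)"
    by (intro tendsto_intros)
  then have lower: "(\<lambda>k. 1 - (4 * q ^ m k + \<rho> ^ m k)) \<longlonglongrightarrow> 1" by simp
  have "eventually (\<lambda>k. \<eta> / 2 < x k \<and> x k < e) sequentially"
    using order_tendstoD[OF x, of "\<eta> / 2"] order_tendstoD[OF x, of e] eta e
    by (auto elim: eventually_elim2)
  then have "eventually (\<lambda>k. 1 - (4 * q ^ m k + \<rho> ^ m k) \<le> pattern_prob (m k) (x k)
      \<and> pattern_prob (m k) (x k) \<le> 1) sequentially"
    by eventually_elim (use bound e eta in \<open>auto intro!: pattern_prob_le_1\<close>)
  then show ?thesis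
    by (intro tendsto_sandwich[OF _ _ lower tendsto_const]) (auto elim: eventually_mono)
qed

lemma sqrt_bigo_self:
  fixes n :: "nat \<Rightarrow> nat"
  assumes "filterlim n at_top sequentially"
  shows "(\<lambda>k. sqrt (real (n k))) \<in> O(\<lambda>k. real (n k))"
proof (rule bigoI)
  have "eventually (\<lambda>k. 1 \<le> n k) sequentially" using assms by (simp add: filterlim_at_top)
  then show "eventually (\<lambda>k. norm (sqrt (real (n k))) \<le> 1 * norm (real (n k))) sequentially"
    by eventually_elim (auto intro!: real_le_lsqrt simp: power2_eq_square)
qed

lemma ratio_tendsto_of_smallo_sqrt:
  fixes a n :: "nat \<Rightarrow> nat"
  assumes n: "filterlim n at_top sequentially"
    and a: "(\<lambda>k. real (a k) - \<eta> * real (n k)) \<in> o(\<lambda>k. sqrt (real (n k)))"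
  shows "(\<lambda>k. real (a k) / real (n k)) \<longlonglongrightarrow> \<eta>"
proof -
  have "(\<lambda>k. (real (a k) - \<eta> * real (n k)) / real (n k)) \<longlonglongrightarrow> 0"
    using landau_o.small_big_trans[OF a sqrt_bigo_self[OF n]] by (rule smalloD_tendsto)
  then have "(\<lambda>k. (real (a k) - \<eta> * real (n k)) / real (n k) + \<eta>) \<longlonglongrightarrow> 0 + \<eta>"
    by (intro tendsto_intros)
  moreover have "eventually (\<lambda>k. 1 \<le> n k) sequentially" using n by (simp add: filterlim_at_top)
  then have "eventually (\<lambda>k. (real (a k) - \<eta> * real (n k)) / real (n k) + \<eta> = real (a k) / real (n k))
      sequentially"
    by eventually_elim (simp add: diff_divide_distrib)
  ultimately show ?thesis by (simp add: tendsto_cong)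
qed

lemma collision_bound_tendsto_0:
  fixes m n :: "nat \<Rightarrow> nat"
  assumes n: "filterlim n at_top sequentially"
    and m: "(\<lambda>k. real (m k)) \<in> o(\<lambda>k. sqrt (real (n k)))"
  shows "(\<lambda>k. real (m k + 2 * m k * m k) / real (n k)) \<longlonglongrightarrow> 0"
proof -
  have "(\<lambda>k. real (m k)) \<in> o(\<lambda>k. real (n k))"
    using landau_o.small_big_trans[OF m sqrt_bigo_self[OF n]] .
  moreover have "(\<lambda>k. real (m k) * real (m k)) \<in> o(\<lambda>k. sqrt (real (n k)) * sqrt (real (n k)))"
    using m m by (rule landau_o.small_mult)
  then have "(\<lambda>k. 2 * (real (m k) * real (m k))) \<in> o(\<lambda>k. real (n k))" by simp
  ultimately have "(\<lambda>k. real (m k) + 2 * (real (m k) * real (m k))) \<in> o(\<lambda>k. real (n k))"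
    by (rule sum_in_smallo)
  then have "(\<lambda>k. (real (m k) + 2 * (real (m k) * real (m k))) / real (n k)) \<longlonglongrightarrow> 0"
    by (rule smalloD_tendsto)
  then show ?thesis by (simp add: mult.assoc)
qed

lemma p1_minus_pattern_prob_tendsto_0:
  fixes n m l :: "nat \<Rightarrow> nat"
  assumes partition: "eventually (\<lambda>k. A1_partition (n k) (l k)) sequentially"
    and n: "filterlim n at_top sequentially"
    and m: "(\<lambda>k. real (m k)) \<in> o(\<lambda>k. sqrt (real (n k)))"
  shows "(\<lambda>k. p1 (n k) (m k) (l k) - pattern_prob (m k) (real (l k) / real (n k))) \<longlonglongrightarrow> 0"
proof (rule Lim_null_comparison[OF _ collision_bound_tendsto_0[OF n m]])
  show "eventually (\<lambda>k. norm (p1 (n k) (m k) (l k) - pattern_prob (m k) (real (l k) / real (n k)))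
      \<le> real (m k + 2 * m k * m k) / real (n k)) sequentially"
    using partition by eventually_elim (simp only: real_norm_def A1_partition.p1_approx)
qed

theorem mainTheorem10:
  fixes m l :: "nat \<Rightarrow> nat" and \<eta> :: real
  assumes eta: "0 < \<eta>" "\<eta> < 1 / 2"
    and m_pos: "\<forall>k\<ge>3. 0 < m (2 * k)"
    and l_bounds: "\<forall>k\<ge>3. 2 \<le> l (2 * k) \<and> 2 * l (2 * k) < 2 * k"
    and m_small: "(\<lambda>k. real (m (2 * k))) \<in> o(\<lambda>k. sqrt (real (2 * k)))"
    and l_asymp: "(\<lambda>k. real (l (2 * k)) - \<eta> * real (2 * k)) \<in> o(\<lambda>k. sqrt (real (2 * k)))"
  shows "(\<forall>m0::nat. (\<lambda>k. m (2 * k)) \<longlonglongrightarrow> m0 \<longrightarrow>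
            (\<lambda>k. p1 (2 * k) (m (2 * k)) (l (2 * k))) \<longlonglongrightarrow> p_inf m0 \<eta>)
       \<and> (filterlim (\<lambda>k. m (2 * k)) at_top sequentially \<longrightarrow>
            (\<lambda>k. p1 (2 * k) (m (2 * k)) (l (2 * k))) \<longlonglongrightarrow> 1
            \<and> (\<lambda>m'. p_inf m' \<eta>) \<longlonglongrightarrow> 1)"
proof -
  let ?x = "\<lambda>k. real (l (2 * k)) / real (2 * k)"
  have n: "filterlim (\<lambda>k::nat. 2 * k) at_top sequentially" by (simp add: mult_nat_left_at_top)
  have "eventually (\<lambda>k. A1_partition (2 * k) (l (2 * k))) sequentially"
    using eventually_ge_at_top[of 3] by eventually_elim (use l_bounds in \<open>simp add: A1_partition_def\<close>)
  from p1_minus_pattern_prob_tendsto_0[OF this n m_small]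
  have approx: "(\<lambda>k. p1 (2 * k) (m (2 * k)) (l (2 * k)) - pattern_prob (m (2 * k)) (?x k)) \<longlonglongrightarrow> 0" .
  have x: "?x \<longlonglongrightarrow> \<eta>" using ratio_tendsto_of_smallo_sqrt[OF n l_asymp] .
  show ?thesis
  proof (intro conjI allI impI)
    fix m0 :: nat assume "(\<lambda>k. m (2 * k)) \<longlonglongrightarrow> m0"
    then have "eventually (\<lambda>k. m (2 * k) = m0) sequentially" by (simp add: tendsto_discrete)
    then have "eventually (\<lambda>k. pattern_prob m0 (?x k) = pattern_prob (m (2 * k)) (?x k)) sequentially"
      by eventually_elim simp
    with pattern_prob_continuous[OF x]
    have "(\<lambda>k. pattern_prob (m (2 * k)) (?x k)) \<longlonglongrightarrow> pattern_prob m0 \<eta>"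
      by (rule Lim_transform_eventually)
    from Lim_transform[OF this approx]
    show "(\<lambda>k. p1 (2 * k) (m (2 * k)) (l (2 * k))) \<longlonglongrightarrow> p_inf m0 \<eta>"
      by (simp add: p_inf_eq_pattern_prob[OF eta])
  next
    assume "filterlim (\<lambda>k. m (2 * k)) at_top sequentially"
    from Lim_transform[OF pattern_prob_tendsto_1[OF eta this x] approx]
    show "(\<lambda>k. p1 (2 * k) (m (2 * k)) (l (2 * k))) \<longlonglongrightarrow> 1" .
    show "(\<lambda>m'. p_inf m' \<eta>) \<longlonglongrightarrow> 1"
      using pattern_prob_tendsto_1[OF eta filterlim_ident tendsto_const] by (simp add: p_inf_eq_pattern_prob[OF eta])
  qed
qed

end
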